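(* Let $\beta$ be a formula and $x'$ a variable not occurring in $\beta$. Let $M,M'$ be frame models and $H,H'$ sets of locations such that $(M,H)$ transitions on $x:=y.f$ to $(M',H')$, $M'\models\beta$ and $H'=[\![\mathit{Sp}(\beta)]\!]_{M'}$. Then $M\models\exists x':x'=f(y).\,(\beta\wedge y\in\mathit{Sp}(\beta))[x'/x]$ and $H=[\![\mathit{Sp}(\exists x':x'=f(y).\,(\beta\wedge y\in\mathit{Sp}(\beta))[x'/x])]\!]_M$.
   Context: Frame logic (FL) is first-order logic with least-fixpoint recursive definitions over a foreground sort of locations (with fields as mutable unary functions) and background sorts including sets of locations, extended with support terms $\mathit{Sp}(\varphi),\mathit{Sp}(t)$ (sets of locations) and guarded constructs $\mathit{ite}(\gamma:\alpha,\beta)$ (meaning $(\gamma\wedge\alpha)\vee(\neg\gamma\wedge\beta)$) and $\exists y:\gamma.\alpha$ (meaning $\exists y.(\gamma\wedge\alpha)$). Supports: constants and variables have support $\emptyset$; $\mathit{Sp}(f(t))=\{t\}\cup\mathit{Sp}(t)$ for mutable $f$ and $\mathit{Sp}(t)$ otherwise; atoms and $\wedge$: union; $\mathit{Sp}(\neg\alpha)=\mathit{Sp}(\alpha)$; $\mathit{Sp}(\mathit{ite}(\gamma:\alpha,\beta))=\mathit{Sp}(\gamma)\cup$ support of the branch selected by $\gamma$; $\mathit{Sp}(\exists y:\gamma.\alpha)$ = union of $\mathit{Sp}(\gamma)$ over all $y$ and of $\mathit{Sp}(\alpha)$ over $y$ satisfying $\gamma$; inductive atoms $R(\bar t)$ get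 the support of the body at $\bar t$ plus $\bigcup_i\mathit{Sp}(t_i)$. Frame models interpret supports and inductive relations by the least solutions. $[x'/x]$ is substitution. Program semantics for lookup: a configuration is $(M,H)$ with $M$ a frame model interpreting store and heap and $H$ the allocated locations. If $M(y)\in H$, $(M,H)$ transitions on $x:=y.f$ to $(M[x\mapsto f^M(M(y))],H)$; otherwise to the abort configuration $\bot$. Formulas have no atomic relations on locations, functions of arity at most one, no functions from background sorts to locations, and quantifier guards of the form $f(z')=z$ or $z\in U$. *)

theory Defs
  imports Main
begin

section \<open>Syntax of (the considered fragment of) Frame Logic\<close>

type_synonym name = string

text \<open>Sorts: locations (foreground), an abstract background data sort, and
  sets of locations (background).\<close>
datatype sort = SL | SD | SS

text \<open>Terms are sorted by construction.  All functions have arity at most one,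
  and there are no functions from background sorts to locations.
  Fld = mutable field (heap), Fun = immutable function.\<close>
datatype lterm = LVar name | LConst name | LFld name lterm | LFun name lterm
and dterm = DVar name | DConst name | DFld name lterm | DFun name dterm | DLFun name lterm
and sterm = SVar name | SConst name | SFld name lterm | SFun name sterm | SLFun name lterm
  | SpL lterm | SpD dterm | SpS sterm | SpF fm
and fm = FTrue
  | EqL lterm lterm | EqD dterm dterm | EqS sterm sterm
  | Mem lterm sterm
  | RelD name "dterm list"
  | RelS name "sterm list"
  | Pred name "arg list"              \<comment> \<open>inductively defined relation R(t1..tn)\<close>
  | Neg fm | Conj fm fm
  | Ite fm fm fm                      \<comment> \<open>ite(gamma : alpha, beta)\<close>
  | Ex name fm fm                     \<comment> \<open>exists y : gamma. alpha  (y a location variable)\<close>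
and arg = AL lterm | AD dterm | AS sterm

datatype ('l,'d) val = VL 'l | VD 'd | VS "'l set"

record ('l,'d) fmodel =
  lvar :: "name \<Rightarrow> 'l"          \<comment> \<open>store\<close>
  dvar :: "name \<Rightarrow> 'd"
  svar :: "name \<Rightarrow> 'l set"
  lcon :: "name \<Rightarrow> 'l"
  dcon :: "name \<Rightarrow> 'd"
  scon :: "name \<Rightarrow> 'l set"
  lfld :: "name \<Rightarrow> 'l \<Rightarrow> 'l"    \<comment> \<open>heap: mutable fields\<close>
  dfld :: "name \<Rightarrow> 'l \<Rightarrow> 'd"
  sfld :: "name \<Rightarrow> 'l \<Rightarrow> 'l set"
  lfun :: "name \<Rightarrow> 'l \<Rightarrow> 'l"
  dfun :: "name \<Rightarrow> 'd \<Rightarrow> 'd"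
  dlfun :: "name \<Rightarrow> 'l \<Rightarrow> 'd"
  sfun :: "name \<Rightarrow> 'l set \<Rightarrow> 'l set"
  slfun :: "name \<Rightarrow> 'l \<Rightarrow> 'l set"
  reld :: "name \<Rightarrow> 'd list \<Rightarrow> bool"
  rels :: "name \<Rightarrow> 'l set list \<Rightarrow> bool"
  rint :: "name \<Rightarrow> ('l,'d) val list \<Rightarrow> bool"      \<comment> \<open>inductive relations\<close>
  rsup :: "name \<Rightarrow> ('l,'d) val list \<Rightarrow> 'l set"   \<comment> \<open>their supports\<close>

definition updL :: "name \<Rightarrow> 'l \<Rightarrow> ('l,'d) fmodel \<Rightarrow> ('l,'d) fmodel" where
  "updL z v M = M\<lparr>lvar := (lvar M)(z := v)\<rparr>"

text \<open>Each term/formula is mapped to a pair (value, support); the value and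
  support are mutually dependent (supports of ite/guards use truth, Sp-terms use
  supports).\<close>
primrec semL :: "lterm \<Rightarrow> ('l,'d) fmodel \<Rightarrow> 'l \<times> 'l set"
and semD :: "dterm \<Rightarrow> ('l,'d) fmodel \<Rightarrow> 'd \<times> 'l set"
and semS :: "sterm \<Rightarrow> ('l,'d) fmodel \<Rightarrow> 'l set \<times> 'l set"
and semF :: "fm \<Rightarrow> ('l,'d) fmodel \<Rightarrow> bool \<times> 'l set"
and semA :: "arg \<Rightarrow> ('l,'d) fmodel \<Rightarrow> ('l,'d) val \<times> 'l set"
where
  "semL (LVar x) M = (lvar M x, {})"
| "semL (LConst c) M = (lcon M c, {})"
| "semL (LFld f t) M = (lfld M f (fst (semL t M)), {fst (semL t M)} \<union> snd (semL t M))"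
| "semL (LFun g t) M = (lfun M g (fst (semL t M)), snd (semL t M))"
| "semD (DVar x) M = (dvar M x, {})"
| "semD (DConst c) M = (dcon M c, {})"
| "semD (DFld f t) M = (dfld M f (fst (semL t M)), {fst (semL t M)} \<union> snd (semL t M))"
| "semD (DFun g t) M = (dfun M g (fst (semD t M)), snd (semD t M))"
| "semD (DLFun g t) M = (dlfun M g (fst (semL t M)), snd (semL t M))"
| "semS (SVar x) M = (svar M x, {})"
| "semS (SConst c) M = (scon M c, {})"
| "semS (SFld f t) M = (sfld M f (fst (semL t M)), {fst (semL t M)} \<union> snd (semL t M))"
| "semS (SFun g t) M = (sfun M g (fst (semS t M)), snd (semS t M))"
| "semS (SLFun g t) M = (slfun M g (fst (semL t M)), snd (semL t M))"
| "semS (SpL t) M = (snd (semL t M), snd (semL t M))"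
| "semS (SpD t) M = (snd (semD t M), snd (semD t M))"
| "semS (SpS t) M = (snd (semS t M), snd (semS t M))"
| "semS (SpF \<phi>) M = (snd (semF \<phi> M), snd (semF \<phi> M))"
| "semF FTrue M = (True, {})"
| "semF (EqL s t) M = (fst (semL s M) = fst (semL t M), snd (semL s M) \<union> snd (semL t M))"
| "semF (EqD s t) M = (fst (semD s M) = fst (semD t M), snd (semD s M) \<union> snd (semD t M))"
| "semF (EqS s t) M = (fst (semS s M) = fst (semS t M), snd (semS s M) \<union> snd (semS t M))"
| "semF (Mem s t) M = (fst (semL s M) \<in> fst (semS t M), snd (semL s M) \<union> snd (semS t M))"
| "semF (RelD r ts) M = (reld M r (map (\<lambda>t. fst (semD t M)) ts),
                         \<Union> (set (map (\<lambda>t. snd (semD t M)) ts)))"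
| "semF (RelS r ts) M = (rels M r (map (\<lambda>t. fst (semS t M)) ts),
                         \<Union> (set (map (\<lambda>t. snd (semS t M)) ts)))"
| "semF (Pred r as) M = (rint M r (map (\<lambda>a. fst (semA a M)) as),
     rsup M r (map (\<lambda>a. fst (semA a M)) as) \<union> \<Union> (set (map (\<lambda>a. snd (semA a M)) as)))"
| "semF (Neg \<alpha>) M = (\<not> fst (semF \<alpha> M), snd (semF \<alpha> M))"
| "semF (Conj \<alpha> \<beta>) M = (fst (semF \<alpha> M) \<and> fst (semF \<beta> M), snd (semF \<alpha> M) \<union> snd (semF \<beta> M))"
| "semF (Ite \<gamma> \<alpha> \<beta>) M =
     (if fst (semF \<gamma> M) then fst (semF \<alpha> M) else fst (semF \<beta> M),
      snd (semF \<gamma> M) \<union> (if fst (semF \<gamma> M) then snd (semF \<alpha> M) else snd (semF \<beta> M)))"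
| "semF (Ex z \<gamma> \<alpha>) M =
     ((\<exists>v. fst (semF \<gamma> (updL z v M)) \<and> fst (semF \<alpha> (updL z v M))),
      (\<Union>v. snd (semF \<gamma> (updL z v M)))
      \<union> (\<Union>v \<in> {v. fst (semF \<gamma> (updL z v M))}. snd (semF \<alpha> (updL z v M))))"
| "semA (AL t) M = (VL (fst (semL t M)), snd (semL t M))"
| "semA (AD t) M = (VD (fst (semD t M)), snd (semD t M))"
| "semA (AS t) M = (VS (fst (semS t M)), snd (semS t M))"

definition holds :: "fm \<Rightarrow> ('l,'d) fmodel \<Rightarrow> bool" where
  "holds \<phi> M = fst (semF \<phi> M)"

definition spF :: "fm \<Rightarrow> ('l,'d) fmodel \<Rightarrow> 'l set" where
  "spF \<phi> M = snd (semF \<phi> M)"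

section \<open>Frame models: least solution of the recursive definitions\<close>

text \<open>A recursive definition for each relation name: formal parameters (with sorts)
  and a body.\<close>
type_synonym defs = "name \<Rightarrow> (name \<times> sort) list \<times> fm"

fun assign :: "name \<times> sort \<Rightarrow> ('l,'d) val \<Rightarrow> ('l,'d) fmodel \<Rightarrow> ('l,'d) fmodel" where
  "assign (n, SL) (VL l) M = M\<lparr>lvar := (lvar M)(n := l)\<rparr>"
| "assign (n, SD) (VD d) M = M\<lparr>dvar := (dvar M)(n := d)\<rparr>"
| "assign (n, SS) (VS s) M = M\<lparr>svar := (svar M)(n := s)\<rparr>"
| "assign _ _ M = M"

fun bind :: "(name \<times> sort) list \<Rightarrow> ('l,'d) val list \<Rightarrow> ('l,'d) fmodel \<Rightarrow> ('l,'d) fmodel" where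
  "bind (p # ps) (v # vs) M = bind ps vs (assign p v M)"
| "bind _ _ M = M"

definition solution :: "defs \<Rightarrow> ('l,'d) fmodel \<Rightarrow> (name \<Rightarrow> ('l,'d) val list \<Rightarrow> bool)
    \<Rightarrow> (name \<Rightarrow> ('l,'d) val list \<Rightarrow> 'l set) \<Rightarrow> bool" where
  "solution D M I S \<longleftrightarrow> (\<forall>r vs.
     (let Mb = bind (fst (D r)) vs (M\<lparr>rint := I, rsup := S\<rparr>)
      in I r vs = holds (snd (D r)) Mb \<and> S r vs = spF (snd (D r)) Mb))"

definition frame_model :: "defs \<Rightarrow> ('l,'d) fmodel \<Rightarrow> bool" where
  "frame_model D M \<longleftrightarrow> solution D M (rint M) (rsup M) \<and>
     (\<forall>I S. solution D M I S \<longrightarrow>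
        (\<forall>r vs. (rint M r vs \<longrightarrow> I r vs) \<and> rsup M r vs \<subseteq> S r vs))"

primrec subL :: "name \<Rightarrow> name \<Rightarrow> lterm \<Rightarrow> lterm"
and subD :: "name \<Rightarrow> name \<Rightarrow> dterm \<Rightarrow> dterm"
and subS :: "name \<Rightarrow> name \<Rightarrow> sterm \<Rightarrow> sterm"
and subF :: "name \<Rightarrow> name \<Rightarrow> fm \<Rightarrow> fm"
and subA :: "name \<Rightarrow> name \<Rightarrow> arg \<Rightarrow> arg"
where
  "subL x x' (LVar z) = LVar (if z = x then x' else z)"
| "subL x x' (LConst c) = LConst c"
| "subL x x' (LFld f t) = LFld f (subL x x' t)"
| "subL x x' (LFun g t) = LFun g (subL x x' t)"
| "subD x x' (DVar z) = DVar z"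
| "subD x x' (DConst c) = DConst c"
| "subD x x' (DFld f t) = DFld f (subL x x' t)"
| "subD x x' (DFun g t) = DFun g (subD x x' t)"
| "subD x x' (DLFun g t) = DLFun g (subL x x' t)"
| "subS x x' (SVar z) = SVar z"
| "subS x x' (SConst c) = SConst c"
| "subS x x' (SFld f t) = SFld f (subL x x' t)"
| "subS x x' (SFun g t) = SFun g (subS x x' t)"
| "subS x x' (SLFun g t) = SLFun g (subL x x' t)"
| "subS x x' (SpL t) = SpL (subL x x' t)"
| "subS x x' (SpD t) = SpD (subD x x' t)"
| "subS x x' (SpS t) = SpS (subS x x' t)"
| "subS x x' (SpF \<phi>) = SpF (subF x x' \<phi>)"
| "subF x x' FTrue = FTrue"
| "subF x x' (EqL s t) = EqL (subL x x' s) (subL x x' t)"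
| "subF x x' (EqD s t) = EqD (subD x x' s) (subD x x' t)"
| "subF x x' (EqS s t) = EqS (subS x x' s) (subS x x' t)"
| "subF x x' (Mem s t) = Mem (subL x x' s) (subS x x' t)"
| "subF x x' (RelD r ts) = RelD r (map (subD x x') ts)"
| "subF x x' (RelS r ts) = RelS r (map (subS x x') ts)"
| "subF x x' (Pred r as) = Pred r (map (subA x x') as)"
| "subF x x' (Neg \<alpha>) = Neg (subF x x' \<alpha>)"
| "subF x x' (Conj \<alpha> \<beta>) = Conj (subF x x' \<alpha>) (subF x x' \<beta>)"
| "subF x x' (Ite \<gamma> \<alpha> \<beta>) = Ite (subF x x' \<gamma>) (subF x x' \<alpha>) (subF x x' \<beta>)"
| "subF x x' (Ex z \<gamma> \<alpha>) =
     (if z = x then Ex z \<gamma> \<alpha> else Ex z (subF x x' \<gamma>) (subF x x' \<alpha>))"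
| "subA x x' (AL t) = AL (subL x x' t)"
| "subA x x' (AD t) = AD (subD x x' t)"
| "subA x x' (AS t) = AS (subS x x' t)"

text \<open>Location variables occurring (free or bound) in a term/formula.\<close>
primrec lvL :: "lterm \<Rightarrow> name set"
and lvD :: "dterm \<Rightarrow> name set"
and lvS :: "sterm \<Rightarrow> name set"
and lvF :: "fm \<Rightarrow> name set"
and lvA :: "arg \<Rightarrow> name set"
where
  "lvL (LVar z) = {z}"
| "lvL (LConst c) = {}"
| "lvL (LFld f t) = lvL t"
| "lvL (LFun g t) = lvL t"
| "lvD (DVar z) = {}"
| "lvD (DConst c) = {}"
| "lvD (DFld f t) = lvL t"
| "lvD (DFun g t) = lvD t"
| "lvD (DLFun g t) = lvL t"
| "lvS (SVar z) = {}"
| "lvS (SConst c) = {}"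
| "lvS (SFld f t) = lvL t"
| "lvS (SFun g t) = lvS t"
| "lvS (SLFun g t) = lvL t"
| "lvS (SpL t) = lvL t"
| "lvS (SpD t) = lvD t"
| "lvS (SpS t) = lvS t"
| "lvS (SpF \<phi>) = lvF \<phi>"
| "lvF FTrue = {}"
| "lvF (EqL s t) = lvL s \<union> lvL t"
| "lvF (EqD s t) = lvD s \<union> lvD t"
| "lvF (EqS s t) = lvS s \<union> lvS t"
| "lvF (Mem s t) = lvL s \<union> lvS t"
| "lvF (RelD r ts) = \<Union> (set (map lvD ts))"
| "lvF (RelS r ts) = \<Union> (set (map lvS ts))"
| "lvF (Pred r as) = \<Union> (set (map lvA as))"
| "lvF (Neg \<alpha>) = lvF \<alpha>"
| "lvF (Conj \<alpha> \<beta>) = lvF \<alpha> \<union> lvF \<beta>"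
| "lvF (Ite \<gamma> \<alpha> \<beta>) = lvF \<gamma> \<union> lvF \<alpha> \<union> lvF \<beta>"
| "lvF (Ex z \<gamma> \<alpha>) = {z} \<union> lvF \<gamma> \<union> lvF \<alpha>"
| "lvA (AL t) = lvL t"
| "lvA (AD t) = lvD t"
| "lvA (AS t) = lvS t"

definition guard_ok :: "name \<Rightarrow> fm \<Rightarrow> bool" where
  "guard_ok y \<gamma> \<longleftrightarrow>
     (\<exists>f z z'. (y = z \<or> y = z') \<and>
        (\<gamma> = EqL (LFld f (LVar z')) (LVar z) \<or> \<gamma> = EqL (LVar z) (LFld f (LVar z'))
       \<or> \<gamma> = EqL (LFun f (LVar z')) (LVar z) \<or> \<gamma> = EqL (LVar z) (LFun f (LVar z'))))
   \<or> (\<exists>U. \<gamma> = Mem (LVar y) U)"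

primrec gdL :: "lterm \<Rightarrow> bool"
and gdD :: "dterm \<Rightarrow> bool"
and gdS :: "sterm \<Rightarrow> bool"
and guarded :: "fm \<Rightarrow> bool"
and gdA :: "arg \<Rightarrow> bool"
where
  "gdL (LVar z) = True"
| "gdL (LConst c) = True"
| "gdL (LFld f t) = gdL t"
| "gdL (LFun g t) = gdL t"
| "gdD (DVar z) = True"
| "gdD (DConst c) = True"
| "gdD (DFld f t) = gdL t"
| "gdD (DFun g t) = gdD t"
| "gdD (DLFun g t) = gdL t"
| "gdS (SVar z) = True"
| "gdS (SConst c) = True"
| "gdS (SFld f t) = gdL t"
| "gdS (SFun g t) = gdS t"
| "gdS (SLFun g t) = gdL t"
| "gdS (SpL t) = gdL t"
| "gdS (SpD t) = gdD t"
| "gdS (SpS t) = gdS t"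
| "gdS (SpF \<phi>) = guarded \<phi>"
| "guarded FTrue = True"
| "guarded (EqL s t) = (gdL s \<and> gdL t)"
| "guarded (EqD s t) = (gdD s \<and> gdD t)"
| "guarded (EqS s t) = (gdS s \<and> gdS t)"
| "guarded (Mem s t) = (gdL s \<and> gdS t)"
| "guarded (RelD r ts) = list_all gdD ts"
| "guarded (RelS r ts) = list_all gdS ts"
| "guarded (Pred r as) = list_all gdA as"
| "guarded (Neg \<alpha>) = guarded \<alpha>"
| "guarded (Conj \<alpha> \<beta>) = (guarded \<alpha> \<and> guarded \<beta>)"
| "guarded (Ite \<gamma> \<alpha> \<beta>) = (guarded \<gamma> \<and> guarded \<alpha> \<and> guarded \<beta>)"
| "guarded (Ex z \<gamma> \<alpha>) = (guard_ok z \<gamma> \<and> guarded \<gamma> \<and> guarded \<alpha>)"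
| "gdA (AL t) = gdL t"
| "gdA (AD t) = gdD t"
| "gdA (AS t) = gdS t"

datatype ('l,'d) config = Cfg "('l,'d) fmodel" "'l set" | Abort

definition lookup_step :: "name \<Rightarrow> name \<Rightarrow> name \<Rightarrow> ('l,'d) config \<Rightarrow> ('l,'d) config" where
  "lookup_step x y f c = (case c of
      Cfg M H \<Rightarrow> (if lvar M y \<in> H
                  then Cfg (M\<lparr>lvar := (lvar M)(x := lfld M f (lvar M y))\<rparr>) H
                  else Abort)
    | Abort \<Rightarrow> Abort)"

end

theory Submission
  imports Defs
begin

text \<open>After the lookup the new value of x is f(y), which in the pre-state is held by
  the fresh variable x' bound by the guard x' = f(y); hence \<beta>[x'/x] evaluated in M
  under that binding behaves exactly like \<beta> in the post-state M'.  The guard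
  contributes exactly the location y to the support, and lookup does not change the
  allocated set, so the conjunct y \<in> Sp(\<beta>) makes the support of the precondition
  equal to Sp(\<beta>) in M', i.e. H.\<close>

lemma updL_simps [simp]:
  "lvar (updL z v N) = (lvar N)(z := v)"
  "dvar (updL z v N) = dvar N" "svar (updL z v N) = svar N"
  "lcon (updL z v N) = lcon N" "dcon (updL z v N) = dcon N" "scon (updL z v N) = scon N"
  "lfld (updL z v N) = lfld N" "dfld (updL z v N) = dfld N" "sfld (updL z v N) = sfld N"
  "lfun (updL z v N) = lfun N" "dfun (updL z v N) = dfun N" "dlfun (updL z v N) = dlfun N"
  "sfun (updL z v N) = sfun N" "slfun (updL z v N) = slfun N"
  "reld (updL z v N) = reld N" "rels (updL z v N) = rels N"
  "rint (updL z v N) = rint N" "rsup (updL z v N) = rsup N"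
  by (simp_all add: updL_def)

lemma updL_updL_same [simp]: "updL a u (updL a w N) = updL a u N"
  by (simp add: updL_def)

lemma updL_commute: "a \<noteq> b \<Longrightarrow> updL a u (updL b w N) = updL b w (updL a u N)"
  by (simp add: updL_def fun_upd_twist)

lemma sem_updL_fresh:
  "z \<notin> lvL t \<Longrightarrow> semL t (updL z w N) = semL t N"
  "z \<notin> lvD d \<Longrightarrow> semD d (updL z w N) = semD d N"
  "z \<notin> lvS s \<Longrightarrow> semS s (updL z w N) = semS s N"
  "z \<notin> lvF \<phi> \<Longrightarrow> semF \<phi> (updL z w N) = semF \<phi> N"
  "z \<notin> lvA a \<Longrightarrow> semA a (updL z w N) = semA a N"
proof (induct t and d and s and \<phi> and a arbitrary: N and N and N and N and N)
  case (Ex u \<gamma> \<alpha>)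
  then have "u \<noteq> z" by auto
  then have "updL u v (updL z w N) = updL z w (updL u v N)" for v
    by (rule updL_commute)
  with Ex show ?case by simp
qed (auto cong: map_cong)

lemma sem_subst:
  "x' \<notin> lvL t \<Longrightarrow> semL (subL x x' t) N = semL t (updL x (lvar N x') N)"
  "x' \<notin> lvD d \<Longrightarrow> semD (subD x x' d) N = semD d (updL x (lvar N x') N)"
  "x' \<notin> lvS s \<Longrightarrow> semS (subS x x' s) N = semS s (updL x (lvar N x') N)"
  "x' \<notin> lvF \<phi> \<Longrightarrow> semF (subF x x' \<phi>) N = semF \<phi> (updL x (lvar N x') N)"
  "x' \<notin> lvA a \<Longrightarrow> semA (subA x x' a) N = semA a (updL x (lvar N x') N)"
  by (induct t and d and s and \<phi> and a arbitrary: N and N and N and N and N)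
     (auto simp: updL_commute cong: map_cong)

lemma semF_subF_updL_fresh:
  assumes "x' \<notin> lvF \<phi>"
  shows "semF (subF x x' \<phi>) (updL x' v N) = semF \<phi> (updL x v N)"
proof (cases "x = x'")
  case False
  then have "updL x v (updL x' v N) = updL x' v (updL x v N)"
    by (rule updL_commute)
  with assms show ?thesis
    by (simp add: sem_subst(4) sem_updL_fresh(4))
qed (simp add: sem_subst(4) assms)

lemma lookup_step_Cfg_eq_Cfg:
  "lookup_step x y f (Cfg M H) = Cfg M' H' \<longleftrightarrow>
     lvar M y \<in> H \<and> M' = updL x (lfld M f (lvar M y)) M \<and> H' = H"
  by (auto simp: lookup_step_def updL_def)

theorem theorem7:
  fixes D :: defs and \<beta> :: fm and x x' y f :: name
    and M M' :: "('l,'d) fmodel" and H H' :: "'l set"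
  assumes "guarded \<beta>"
    and "x' \<notin> lvF \<beta>" and "x' \<noteq> y" and "x \<noteq> y"
    and "frame_model D M" and "frame_model D M'"
    and "lookup_step x y f (Cfg M H) = Cfg M' H'"
    and "holds \<beta> M'" and "H' = spF \<beta> M'"
  shows "let \<phi> = Ex x' (EqL (LVar x') (LFld f (LVar y)))
                   (subF x x' (Conj \<beta> (Mem (LVar y) (SpF \<beta>))))
         in holds \<phi> M \<and> H = spF \<phi> M"
proof -
  define v0 where "v0 = lfld M f (lvar M y)"
  have yH: "lvar M y \<in> H" and M': "M' = updL x v0 M" and "H' = H"
    using assms(7) by (simp_all add: lookup_step_Cfg_eq_Cfg v0_def)
  with assms(8,9) have post: "fst (semF \<beta> (updL x v0 M))" "snd (semF \<beta> (updL x v0 M)) = H"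
    by (simp_all add: holds_def spF_def)
  have guard: "semF (EqL (LVar x') (LFld f (LVar y))) (updL x' v M) = (v = v0, {lvar M y})"
    for v
    using assms(3) by (simp add: v0_def)
  have body: "subF x x' (Conj \<beta> (Mem (LVar y) (SpF \<beta>)))
      = Conj (subF x x' \<beta>) (Mem (LVar y) (SpF (subF x x' \<beta>)))"
    using assms(4) by simp
  show ?thesis
    using post yH assms(3,4)
    by (auto simp: Let_def holds_def spF_def body guard v0_def semF_subF_updL_fresh[OF assms(2)])
qed

end
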